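(* Let $l$ be a positive integer such that for every $i\in\mathcal{V}$ there exist $l$ matrices in $\mathcal{M}$ (possibly repeated) whose product, in some order, has all entries of its column indexed by $i$ strictly positive. For $k\ge 1$ let $W_k=M_{(k-1)l+1}M_{(k-1)l+2}\cdots M_{kl}$. Then there exist constants $w>0$ and $d<1$ such that, for each $k\ge 1$, with probability equal to $w$ we have $\lambda(W_k)\le d$, and these events are independent for different $k$.
   Context: Let $\mathcal{G}=(\mathcal{V},\mathcal{E})$ be a strongly connected directed graph with $\mathcal{V}=\{1,\dots,m\}$, with a self-loop $(i,i)\in\mathcal{E}$ at every node. Let $\mathcal{O}_i=\{j:(i,j)\in\mathcal{E}\}$ and $D_i=|\mathcal{O}_i|$. At each time step $k\ge1$ each link $(i,j)\in\mathcal{E}$ is reliable with probability $q_{ij}\in(0,1]$, independently across links and across time steps; let $X_k[i,j]=1$ if $(i,j)$ is reliable at step $k$ and $0$ otherwise. Let $n=m+|\mathcal{E}|$ and index rows/columns of $n\times n$ matrices by $\mathcal{V}\cup\mathcal{E}$ (each link $(i,j)$ is an additional "virtual buffer" index). The random matrix $M_k$ is defined by: for $i\in\mathcal{V}$ and $(i,j)\in\mathcal{E}$, $M_k[i,j]=X_k[i,j]/D_i$ and $M_k[i,(i,j)]=(1-X_k[i,j])/D_i$, all other entries of row $i$ being $0$; for $(i,j)\in\mathcal{E}$, $M_k[(i,j),j]=X_k[i,j]$ and $M_k[(i,j),(i,j)]=1-X_k[i,j]$, all other entries of row $(i,j)$ being $0$. Each $M_k$ is row stochastic. $\mathcal{M}$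 denotes the finite set of all $2^{|\mathcal{E}|}$ matrices obtainable this way. For a row stochastic matrix $A$, $\lambda(A)=1-\min_{i_1,i_2}\sum_j\min(A[i_1,j],A[i_2,j])$. *)

theory Defs
  imports "HOL-Probability.Probability"
begin

text \<open>Row/column indices: nodes are Inl i (i in {1..m}), virtual buffers are Inr (i,j) for (i,j) in E.\<close>
type_synonym idx = "nat + nat \<times> nat"
type_synonym mat = "idx \<Rightarrow> idx \<Rightarrow> real"

definition index_set :: "nat \<Rightarrow> (nat \<times> nat) set \<Rightarrow> idx set" where
  "index_set m E = Inl ` {1..m} \<union> Inr ` E"

definition outdeg :: "(nat \<times> nat) set \<Rightarrow> nat \<Rightarrow> nat" where
  "outdeg E i = card {j. (i, j) \<in> E}"

text \<open>The matrix M determined by the reliability pattern X (X e = True iff link e is reliable).\<close>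
definition Mmat :: "(nat \<times> nat) set \<Rightarrow> (nat \<times> nat \<Rightarrow> bool) \<Rightarrow> mat" where
  "Mmat E X r c =
    (case r of
       Inl i \<Rightarrow>
         (case c of
            Inl j \<Rightarrow> (if (i, j) \<in> E \<and> X (i, j) then 1 / real (outdeg E i) else 0)
          | Inr (i', j) \<Rightarrow> (if i' = i \<and> (i, j) \<in> E \<and> \<not> X (i, j) then 1 / real (outdeg E i) else 0))
     | Inr (i, j) \<Rightarrow>
         (case c of
            Inl j' \<Rightarrow> (if j' = j \<and> X (i, j) then 1 else 0)
          | Inr e \<Rightarrow> (if e = (i, j) \<and> \<not> X (i, j) then 1 else 0)))"

definition Mset :: "(nat \<times> nat) set \<Rightarrow> mat set" where
  "Mset E = {Mmat E X | X. True}"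

definition matmul :: "idx set \<Rightarrow> mat \<Rightarrow> mat \<Rightarrow> mat" where
  "matmul I A B r c = (\<Sum>k\<in>I. A r k * B k c)"

definition idmat :: mat where
  "idmat r c = (if r = c then 1 else 0)"

fun matlist :: "idx set \<Rightarrow> mat list \<Rightarrow> mat" where
  "matlist I [] = idmat"
| "matlist I (A # As) = matmul I A (matlist I As)"

definition lam :: "idx set \<Rightarrow> mat \<Rightarrow> real" where
  "lam I A = 1 - Min ((\<lambda>(i1, i2). \<Sum>j\<in>I. min (A i1 j) (A i2 j)) ` (I \<times> I))"

definition Wmat :: "nat \<Rightarrow> (nat \<times> nat) set \<Rightarrow> nat \<Rightarrow> (nat \<Rightarrow> nat \<times> nat \<Rightarrow> 'w \<Rightarrow> bool) \<Rightarrow> nat \<Rightarrow> 'w \<Rightarrow> mat" where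
  "Wmat m E l X k \<omega> =
     matlist (index_set m E) (map (\<lambda>t. Mmat E (\<lambda>e. X ((k - 1) * l + t + 1) e \<omega>)) [0..<l])"

end

theory Submission
  imports Defs
begin

text \<open>Take \<open>d = \<lambda>(T\<^sup>l)\<close>, where \<open>T\<close> is the matrix with every link reliable. In a node column,
  any product of \<open>l\<close> matrices of \<M> is positive only where \<open>T\<^sup>l\<close> is, so the hypothesis gives
  \<open>T\<^sup>l\<close> a positive column and hence \<open>d < 1\<close>. The event \<open>\<lambda>(W\<^sub>k) \<le> d\<close> depends only on the
  reliability pattern of the links during the \<open>k\<close>-th block of \<open>l\<close> steps. Its probability is
  the sum, over the admissible patterns, of products of factors \<open>q e\<close> and \<open>1 - q e\<close>: the
  same for every \<open>k\<close>, and positive because the all-reliable pattern is admissible. The events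
  are independent since different blocks involve disjoint sets of independent link states.\<close>

lemma Mmat_nonneg: "Mmat E X r c \<ge> 0"
  unfolding Mmat_def by (auto split: sum.split prod.split)

lemma matlist_nonneg:
  assumes "\<forall>A\<in>set As. \<forall>r c. A r c \<ge> 0"
  shows "matlist I As r c \<ge> 0"
  using assms
  by (induction As arbitrary: r c)
     (auto simp: idmat_def matmul_def intro!: sum_nonneg mult_nonneg_nonneg)

lemma Mmat_cong:
  assumes "\<forall>e\<in>E. X e = X' e" "r \<in> index_set m E"
  shows "Mmat E X r c = Mmat E X' r c"
  using assms unfolding Mmat_def index_set_def
  by (auto split: sum.split prod.split)

lemma matlist_cong:
  assumes "list_all2 (\<lambda>A B. \<forall>r\<in>I. \<forall>c. A r c = B r c) As Bs" "r \<in> I"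
  shows "matlist I As r c = matlist I Bs r c"
  using assms
proof (induction As Bs arbitrary: r c rule: list_all2_induct)
  case Nil then show ?case by simp
next
  case (Cons A B As Bs)
  then show ?case by (auto simp: matmul_def intro!: sum.cong)
qed

lemma lam_cong:
  assumes "\<forall>r\<in>I. \<forall>c\<in>I. A r c = B r c"
  shows "lam I A = lam I B"
  unfolding lam_def using assms
  by (auto intro!: arg_cong[where f=Min] image_cong sum.cong)

lemma lam_lt_1_of_pos_column:
  assumes "finite I" "c \<in> I" "\<forall>r\<in>I. A r c > 0" "\<forall>r\<in>I. \<forall>c\<in>I. A r c \<ge> 0"
  shows "lam I A < 1"
proof -
  let ?overlap = "\<lambda>(i1, i2). \<Sum>j\<in>I. min (A i1 j) (A i2 j)"
  have "?overlap (i1, i2) > 0" if "i1 \<in> I" "i2 \<in> I" for i1 i2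
  proof -
    have "min (A i1 c) (A i2 c) \<le> (\<Sum>j\<in>I. min (A i1 j) (A i2 j))"
      using assms that by (intro member_le_sum) auto
    moreover have "min (A i1 c) (A i2 c) > 0" using assms that by auto
    ultimately show ?thesis by auto
  qed
  then have "Min (?overlap ` (I \<times> I)) > 0"
    using assms by (subst Min_gr_iff) auto
  then show ?thesis unfolding lam_def by simp
qed

text \<open>\<open>f (t, e)\<close> is the reliability of link \<open>e\<close> at the \<open>t\<close>-th of \<open>l\<close> steps.\<close>
definition pattern_lam :: "nat \<Rightarrow> (nat \<times> nat) set \<Rightarrow> nat \<Rightarrow> (nat \<times> nat \<times> nat \<Rightarrow> bool) \<Rightarrow> real" where
  "pattern_lam m E l f =
     lam (index_set m E) (matlist (index_set m E) (map (\<lambda>t. Mmat E (\<lambda>e. f (t, e))) [0..<l]))"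

lemma pattern_lam_cong:
  assumes "\<forall>j\<in>{0..<l} \<times> E. f j = g j"
  shows "pattern_lam m E l f = pattern_lam m E l g"
  unfolding pattern_lam_def
  using assms
  by (intro lam_cong ballI matlist_cong) (auto simp: list_all2_conv_all_nth intro!: Mmat_cong)

locale buffered_network =
  fixes m :: nat and E :: "(nat \<times> nat) set"
  assumes E_sub: "E \<subseteq> {1..m} \<times> {1..m}"
    and self_loops: "\<forall>i\<in>{1..m}. (i, i) \<in> E"
begin

abbreviation "I \<equiv> index_set m E"
abbreviation "Mrel \<equiv> Mmat E (\<lambda>_. True)"
abbreviation "Mrel_pow n \<equiv> matlist I (replicate n Mrel)"

lemma finite_E: "finite E"
  using E_sub finite_subset by blast

lemma finite_I: "finite I"
  unfolding index_set_def using finite_E by auto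

lemma Inl_in_I: "j \<in> {1..m} \<Longrightarrow> Inl j \<in> I"
  unfolding index_set_def by auto

lemma Mrel_pow_nonneg: "Mrel_pow n r c \<ge> 0"
  by (rule matlist_nonneg) (auto intro: Mmat_nonneg)

lemma Mrel_pow_Suc_ge:
  assumes "k \<in> I"
  shows "Mrel r k * Mrel_pow n k c \<le> Mrel_pow (Suc n) r c"
  using assms finite_I
  by (auto simp: matmul_def intro!: member_le_sum mult_nonneg_nonneg Mmat_nonneg Mrel_pow_nonneg)

lemma Mrel_pow_Suc_buffer:
  assumes "(a, b) \<in> E"
  shows "Mrel_pow (Suc n) (Inr (a, b)) c = Mrel_pow n (Inl b) c"
proof -
  have "Mrel_pow (Suc n) (Inr (a, b)) c = (\<Sum>k\<in>I. if k = Inl b then Mrel_pow n k c else 0)"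
    by (auto simp: matmul_def Mmat_def split: sum.split intro!: sum.cong)
  also have "\<dots> = Mrel_pow n (Inl b) c"
    using assms E_sub finite_I Inl_in_I by auto
  finally show ?thesis .
qed

lemma Mrel_node_pos:
  assumes "(a, j) \<in> E"
  shows "Mrel (Inl a) (Inl j) > 0"
proof -
  have "finite {j. (a, j) \<in> E}"
    by (rule finite_subset[of _ "snd ` E"]) (force, simp add: finite_E)
  then have "outdeg E a > 0"
    using assms by (auto simp: outdeg_def card_gt_0_iff)
  then show ?thesis using assms by (simp add: Mmat_def)
qed

lemma Mrel_pow_pos_Suc_node:
  assumes "j \<in> {1..m}" "Mrel_pow n (Inl j) c > 0"
  shows "Mrel_pow (Suc n) (Inl j) c > 0"
  using Mrel_pow_Suc_ge[OF Inl_in_I[OF assms(1)], of "Inl j" n c]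
    Mrel_node_pos[of j j] self_loops assms
  by (smt (verit) mult_pos_pos)

text \<open>Positivity in a node column persists: the self-loops let a packet wait at its
  destination, and a buffer only delays delivery to its receiving node.\<close>
lemma Mrel_pow_pos_Suc:
  assumes "r \<in> I" "Mrel_pow n r (Inl i) > 0"
  shows "Mrel_pow (Suc n) r (Inl i) > 0"
proof (cases r)
  case (Inl j)
  then show ?thesis using assms Mrel_pow_pos_Suc_node unfolding index_set_def by auto
next
  case (Inr e)
  then obtain a b where r: "r = Inr (a, b)" and ab: "(a, b) \<in> E"
    using assms(1) unfolding index_set_def by auto
  then obtain n' where n: "n = Suc n'"
    using assms(2) by (cases n) (auto simp: idmat_def)
  have "b \<in> {1..m}" using ab E_sub by auto
  then show ?thesis
    using assms(2) Mrel_pow_pos_Suc_node Mrel_pow_Suc_buffer[OF ab] r n by metis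
qed

lemma Mrel_pow_pos_step:
  assumes "A \<in> Mset E" "r \<in> I" "A r k > 0" "Mrel_pow n k (Inl i) > 0"
  shows "Mrel_pow (Suc n) r (Inl i) > 0"
proof -
  obtain X where A: "A = Mmat E X" using assms(1) unfolding Mset_def by auto
  have via_node: "Mrel_pow (Suc n) (Inl a) (Inl i) > 0"
    if "(a, j) \<in> E" "Mrel_pow n (Inl j) (Inl i) > 0" for a j
  proof -
    have "Inl j \<in> I" using that E_sub Inl_in_I by auto
    then show ?thesis
      using Mrel_pow_Suc_ge[of "Inl j" "Inl a" n "Inl i"] Mrel_node_pos[OF that(1)] that(2)
      by (smt (verit) mult_pos_pos)
  qed
  show ?thesis
  proof (cases r)
    case (Inl a)
    show ?thesis
    proof (cases k)
      case (Inl j)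
      then show ?thesis
        using assms(3,4) A \<open>r = Inl a\<close> via_node by (auto simp: Mmat_def split: if_splits)
    next
      case (Inr e)
      then obtain j where k: "k = Inr (a, j)" and aj: "(a, j) \<in> E"
        using assms(3) A \<open>r = Inl a\<close> by (auto simp: Mmat_def split: if_splits prod.splits)
      then have "Mrel_pow (Suc n) k (Inl i) > 0"
        using assms(4) Mrel_pow_pos_Suc unfolding index_set_def by auto
      then show ?thesis using via_node[OF aj] Mrel_pow_Suc_buffer[OF aj] k \<open>r = Inl a\<close> by simp
    qed
  next
    case (Inr e)
    then obtain a b where r: "r = Inr (a, b)" and ab: "(a, b) \<in> E"
      using assms(2) unfolding index_set_def by auto
    then have "k = Inl b \<or> k = r"
      using assms(3) A by (auto simp: Mmat_def split: if_splits sum.splits)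
    then show ?thesis
    proof
      assume "k = Inl b"
      then show ?thesis using assms(4) Mrel_pow_Suc_buffer[OF ab] r by simp
    next
      assume "k = r"
      then show ?thesis using assms(2,4) Mrel_pow_pos_Suc by simp
    qed
  qed
qed

lemma Mrel_pow_pos_of_product:
  assumes "set As \<subseteq> Mset E" "r \<in> I" "matlist I As r (Inl i) > 0"
  shows "Mrel_pow (length As) r (Inl i) > 0"
  using assms
proof (induction As arbitrary: r)
  case Nil then show ?case by simp
next
  case (Cons A As)
  have nonneg: "matlist I As k (Inl i) \<ge> 0" "A r k \<ge> 0" for k
    using Cons.prems(1) by (auto simp: Mset_def intro!: matlist_nonneg Mmat_nonneg)
  obtain k where k: "k \<in> I" "A r k * matlist I As k (Inl i) > 0"
    using Cons.prems(3) sum_nonpos[of I "\<lambda>k. A r k * matlist I As k (Inl i)"]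
    by (force simp: matmul_def not_less)
  then have "A r k > 0" "matlist I As k (Inl i) > 0"
    using nonneg[of k] by (auto simp: zero_less_mult_iff)
  then show ?case
    using Cons.IH[OF _ k(1)] Cons.prems(1,2) Mrel_pow_pos_step by auto
qed

lemma lam_Mrel_pow_lt_1:
  assumes "i \<in> {1..m}" "set As \<subseteq> Mset E" "\<forall>r\<in>I. matlist I As r (Inl i) > 0"
  shows "lam I (Mrel_pow (length As)) < 1"
  using assms Mrel_pow_pos_of_product
  by (intro lam_lt_1_of_pos_column[OF finite_I Inl_in_I] Mrel_pow_nonneg ballI) auto

end

lemma (in prob_space) prob_restrict_in_eq_sum_prod:
  fixes Y :: "'i \<Rightarrow> 'a \<Rightarrow> 'b::finite"
  assumes indep: "indep_vars (\<lambda>_. count_space UNIV) Y K"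
    and h: "inj_on h J" "h ` J \<subseteq> K" and J: "finite J" "J \<noteq> {}"
  shows "prob {\<omega> \<in> space M. (\<lambda>j\<in>J. Y (h j) \<omega>) \<in> S}
       = (\<Sum>f\<in>S \<inter> (J \<rightarrow>\<^sub>E UNIV). \<Prod>j\<in>J. prob {\<omega> \<in> space M. Y (h j) \<omega> = f j})"
proof -
  define atom where "atom f = {\<omega> \<in> space M. \<forall>j\<in>J. Y (h j) \<omega> = f j}" for f
  have rv: "random_variable (count_space UNIV) (Y (h j))" if "j \<in> J" for j
    using indep h that unfolding indep_vars_def by blast
  have atom_INT: "atom f = (\<Inter>j\<in>J. Y (h j) -` {f j} \<inter> space M)" for f
    unfolding atom_def using J by auto
  have atom_events: "atom f \<in> events" for f
    unfolding atom_INT using J by (intro sets.finite_INT measurable_sets[OF rv]) auto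
  have "(\<lambda>j\<in>J. Y (h j) \<omega>) = f" if "f \<in> J \<rightarrow>\<^sub>E UNIV" "\<omega> \<in> atom f" for f \<omega>
    using that by (auto simp: atom_def PiE_iff extensional_def fun_eq_iff)
  then have "{\<omega> \<in> space M. (\<lambda>j\<in>J. Y (h j) \<omega>) \<in> S} = (\<Union>f\<in>S \<inter> (J \<rightarrow>\<^sub>E UNIV). atom f)"
    unfolding atom_def by auto
  moreover have "disjoint_family_on atom (S \<inter> (J \<rightarrow>\<^sub>E UNIV))"
    unfolding disjoint_family_on_def atom_def by (auto intro: PiE_ext)
  moreover have "finite (S \<inter> (J \<rightarrow>\<^sub>E (UNIV :: 'b set)))"
    using J by (intro finite_Int disjI2 finite_PiE) auto
  ultimately have "prob {\<omega> \<in> space M. (\<lambda>j\<in>J. Y (h j) \<omega>) \<in> S}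
      = (\<Sum>f\<in>S \<inter> (J \<rightarrow>\<^sub>E UNIV). prob (atom f))"
    using atom_events finite_measure_finite_Union[of "S \<inter> (J \<rightarrow>\<^sub>E UNIV)" atom] by auto
  also have "\<dots> = (\<Sum>f\<in>S \<inter> (J \<rightarrow>\<^sub>E UNIV). \<Prod>j\<in>J. prob {\<omega> \<in> space M. Y (h j) \<omega> = f j})"
  proof (rule sum.cong[OF refl])
    fix f assume "f \<in> S \<inter> (J \<rightarrow>\<^sub>E UNIV)"
    let ?A = "\<lambda>i. {f (the_inv_into J h i)}"
    have "prob (\<Inter>i\<in>h ` J. Y i -` ?A i \<inter> space M) = (\<Prod>i\<in>h ` J. prob (Y i -` ?A i \<inter> space M))"
      using h J by (intro indep_varsD[OF indep]) auto
    then have "prob (atom f) = (\<Prod>j\<in>J. prob (Y (h j) -` {f j} \<inter> space M))"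
      using h J by (simp add: atom_INT prod.reindex the_inv_into_f_f)
    also have "\<dots> = (\<Prod>j\<in>J. prob {\<omega> \<in> space M. Y (h j) \<omega> = f j})"
      by (intro prod.cong) (auto simp: vimage_def Int_def conj_commute)
    finally show "prob (atom f) = \<dots>" .
  qed
  finally show ?thesis .
qed

definition pattern_prob :: "('j \<Rightarrow> real) \<Rightarrow> 'j set \<Rightarrow> ('j \<Rightarrow> bool) \<Rightarrow> real" where
  "pattern_prob p J f = (\<Prod>j\<in>J. if f j then p j else 1 - p j)"

lemma sum_pattern_prob_pos:
  assumes "finite J" "\<forall>j\<in>J. 0 < p j \<and> p j \<le> 1" "(\<lambda>j\<in>J. True) \<in> S"
  shows "(\<Sum>f\<in>S \<inter> (J \<rightarrow>\<^sub>E UNIV). pattern_prob p J f) > 0"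
proof -
  have "pattern_prob p J (\<lambda>j\<in>J. True) > 0"
    using assms unfolding pattern_prob_def by (intro prod_pos) auto
  moreover have "pattern_prob p J f \<ge> 0" for f
    using assms unfolding pattern_prob_def by (intro prod_nonneg) auto
  moreover have "finite (S \<inter> (J \<rightarrow>\<^sub>E (UNIV :: bool set)))"
    using assms by (intro finite_Int disjI2 finite_PiE) auto
  ultimately show ?thesis
    using assms(3) by (intro sum_pos2[where i="\<lambda>j\<in>J. True"]) auto
qed

definition block :: "(nat \<times> nat) set \<Rightarrow> nat \<Rightarrow> (nat \<Rightarrow> nat \<times> nat \<Rightarrow> 'w \<Rightarrow> bool) \<Rightarrow> nat \<Rightarrow> 'w
    \<Rightarrow> nat \<times> nat \<times> nat \<Rightarrow> bool" where
  "block E l X k \<omega> = (\<lambda>(t, e)\<in>{0..<l} \<times> E. X ((k - 1) * l + t + 1) e \<omega>)"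

lemma lam_Wmat_eq_pattern_lam:
  "lam (index_set m E) (Wmat m E l X k \<omega>) = pattern_lam m E l (block E l X k \<omega>)"
proof -
  have "lam (index_set m E) (Wmat m E l X k \<omega>) = pattern_lam m E l (\<lambda>(t, e). X ((k - 1) * l + t + 1) e \<omega>)"
    by (simp add: Wmat_def pattern_lam_def)
  also have "\<dots> = pattern_lam m E l (block E l X k \<omega>)"
    by (rule pattern_lam_cong) (auto simp: block_def)
  finally show ?thesis .
qed

lemma (in prob_space) prob_block_in:
  assumes indep: "indep_vars (\<lambda>_. count_space UNIV) (\<lambda>(k, e). X k e) ({1..} \<times> E)"
    and distr: "\<forall>k\<ge>1. \<forall>e\<in>E. prob {\<omega> \<in> space M. X k e \<omega>} = q e"
    and E: "finite E" "E \<noteq> {}" and l: "l > 0"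
  shows "prob {\<omega> \<in> space M. block E l X k \<omega> \<in> S}
       = (\<Sum>f\<in>S \<inter> ({0..<l} \<times> E \<rightarrow>\<^sub>E UNIV). pattern_prob (q \<circ> snd) ({0..<l} \<times> E) f)"
proof -
  define h where "h = (\<lambda>(t::nat, e::nat \<times> nat). ((k - 1) * l + t + 1, e))"
  have block: "block E l X k \<omega> = (\<lambda>j\<in>{0..<l} \<times> E. (\<lambda>(k, e). X k e) (h j) \<omega>)" for \<omega>
    unfolding block_def h_def by (intro restrict_ext) auto
  have prob_X: "prob {\<omega> \<in> space M. X i e \<omega> = b} = (if b then q e else 1 - q e)"
    if "i \<ge> 1" "e \<in> E" for i e b
  proof -
    have "{\<omega> \<in> space M. X i e \<omega>} = (\<lambda>(k, e). X k e) (i, e) -` {True} \<inter> space M" by auto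
    also have "\<dots> \<in> events"
      using indep that unfolding indep_vars_def by (intro measurable_sets) auto
    finally have "{\<omega> \<in> space M. X i e \<omega>} \<in> events" .
    moreover have "{\<omega> \<in> space M. X i e \<omega> = b}
        = (if b then {\<omega> \<in> space M. X i e \<omega>} else space M - {\<omega> \<in> space M. X i e \<omega>})"
      by auto
    ultimately show ?thesis
      using distr that prob_compl by simp
  qed
  have "inj_on h ({0..<l} \<times> E)" "h ` ({0..<l} \<times> E) \<subseteq> {1..} \<times> E"
    by (auto simp: h_def inj_on_def)
  then have "prob {\<omega> \<in> space M. block E l X k \<omega> \<in> S} = (\<Sum>f\<in>S \<inter> ({0..<l} \<times> E \<rightarrow>\<^sub>E UNIV).
      \<Prod>j\<in>{0..<l} \<times> E. prob {\<omega> \<in> space M. (\<lambda>(k, e). X k e) (h j) \<omega> = f j})"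
    unfolding block using E l by (intro prob_restrict_in_eq_sum_prod[OF indep]) auto
  also have "\<dots> = (\<Sum>f\<in>S \<inter> ({0..<l} \<times> E \<rightarrow>\<^sub>E UNIV). pattern_prob (q \<circ> snd) ({0..<l} \<times> E) f)"
    unfolding pattern_prob_def
  proof (intro sum.cong prod.cong refl)
    fix f and j :: "nat \<times> nat \<times> nat" assume "j \<in> {0..<l} \<times> E"
    then show "prob {\<omega> \<in> space M. (\<lambda>(k, e). X k e) (h j) \<omega> = f j}
        = (if f j then (q \<circ> snd) j else 1 - (q \<circ> snd) j)"
      by (cases j) (simp add: h_def prob_X)
  qed
  finally show ?thesis .
qed

lemma (in prob_space) indep_events_block:
  assumes indep: "indep_vars (\<lambda>_. count_space UNIV) (\<lambda>(k, e). X k e) ({1..} \<times> E)"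
    and E: "finite E"
  shows "indep_events (\<lambda>k. {\<omega> \<in> space M. block E l X k \<omega> \<in> S k}) {1..}"
proof -
  define K where "K k = {(k - 1) * l + 1 .. k * l} \<times> E" for k
  define sel where "sel k y = (\<lambda>(t, e)\<in>{0..<l} \<times> E. y ((k - 1) * l + t + 1, e))"
    for k and y :: "nat \<times> nat \<times> nat \<Rightarrow> bool"
  have disjoint: "K a \<inter> K b = {}" if "a < b" for a b
  proof -
    have le: "a * l \<le> (b - 1) * l" using that by (intro mult_le_mono1) auto
    have False if "(i, e) \<in> K a" "(i, e) \<in> K b" for i e
    proof -
      from that have "i \<le> a * l" "(b - 1) * l + 1 \<le> i" unfolding K_def by auto
      with le show False by linarith
    qed
    then show ?thesis by auto
  qed
  have disjoint_family: "disjoint_family_on K {1..}"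
    unfolding disjoint_family_on_def
    by (metis disjoint Int_commute linorder_neqE_nat)
  have restricted: "indep_vars (\<lambda>k. PiM (K k) (\<lambda>_. count_space UNIV))
      (\<lambda>k \<omega>. \<lambda>i\<in>K k. (\<lambda>(k, e). X k e) i \<omega>) {1..}"
    by (rule indep_vars_restrict[OF indep _ disjoint_family]) (auto simp: K_def)
  have count_space: "PiM (K k) (\<lambda>_. count_space UNIV) = count_space (K k \<rightarrow>\<^sub>E (UNIV :: bool set))" for k
    using E by (intro count_space_PiM_finite) (auto simp: K_def)
  have "indep_events (\<lambda>k. {\<omega> \<in> space M. sel k (\<lambda>i\<in>K k. (\<lambda>(k, e). X k e) i \<omega>) \<in> S k}) {1..}"
    by (rule indep_eventsI_indep_vars[OF restricted]) (simp add: count_space)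
  moreover have "sel k (\<lambda>i\<in>K k. (\<lambda>(k, e). X k e) i \<omega>) = block E l X k \<omega>" if "k \<in> {1..}" for k \<omega>
  proof -
    have "(k - 1) * l + t + 1 \<le> k * l" if "t < l" for t
      using \<open>k \<in> {1..}\<close> that by (cases k) auto
    then show ?thesis
      unfolding sel_def block_def K_def by (intro restrict_ext) auto
  qed
  then have "indep_sets (\<lambda>k. {{\<omega> \<in> space M. sel k (\<lambda>i\<in>K k. (\<lambda>(k, e). X k e) i \<omega>) \<in> S k}}) {1..}
      = indep_sets (\<lambda>k. {{\<omega> \<in> space M. block E l X k \<omega> \<in> S k}}) {1..}"
    by (intro indep_sets_cong) simp_all
  ultimately show ?thesis
    unfolding indep_events_def_alt by simp
qed

theorem lemma1:
  fixes m l :: nat and E :: "(nat \<times> nat) set" and q :: "nat \<times> nat \<Rightarrow> real"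
    and P :: "'w measure" and X :: "nat \<Rightarrow> nat \<times> nat \<Rightarrow> 'w \<Rightarrow> bool"
  assumes m_pos: "m \<ge> 1"
    and E_sub: "E \<subseteq> {1..m} \<times> {1..m}"
    and strong: "\<forall>i\<in>{1..m}. \<forall>j\<in>{1..m}. (i, j) \<in> E\<^sup>*"
    and loops: "\<forall>i\<in>{1..m}. (i, i) \<in> E"
    and q_range: "\<forall>e\<in>E. 0 < q e \<and> q e \<le> 1"
    and P: "prob_space P"
    and indep: "prob_space.indep_vars P (\<lambda>_. count_space UNIV) (\<lambda>(k, e). X k e) ({1..} \<times> E)"
    and distr: "\<forall>k\<ge>1. \<forall>e\<in>E. measure P {\<omega> \<in> space P. X k e \<omega>} = q e"
    and l_pos: "l > 0"
    and hyp: "\<forall>i\<in>{1..m}. \<exists>Ms. length Ms = l \<and> set Ms \<subseteq> Mset E \<and>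
               (\<forall>r\<in>index_set m E. matlist (index_set m E) Ms r (Inl i) > 0)"
  shows "\<exists>w d. w > 0 \<and> d < 1 \<and>
           (\<forall>k\<ge>1. measure P {\<omega> \<in> space P. lam (index_set m E) (Wmat m E l X k \<omega>) \<le> d} = w) \<and>
           prob_space.indep_events P
             (\<lambda>k. {\<omega> \<in> space P. lam (index_set m E) (Wmat m E l X k \<omega>) \<le> d}) {1..}"
proof -
  interpret prob_space P by (rule P)
  interpret buffered_network m E using E_sub loops by unfold_locales
  define J where "J = {0..<l} \<times> E"
  define d where "d = pattern_lam m E l (\<lambda>_. True)"
  define S where "S = {f. pattern_lam m E l f \<le> d}"
  define w where "w = (\<Sum>f\<in>S \<inter> (J \<rightarrow>\<^sub>E UNIV). pattern_prob (q \<circ> snd) J f)"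
  have events: "{\<omega> \<in> space P. lam I (Wmat m E l X k \<omega>) \<le> d}
      = {\<omega> \<in> space P. block E l X k \<omega> \<in> S}" for k
    by (simp add: S_def lam_Wmat_eq_pattern_lam)
  have "d < 1"
  proof -
    obtain As where "length As = l" "set As \<subseteq> Mset E" "\<forall>r\<in>I. matlist I As r (Inl 1) > 0"
      using hyp m_pos by fastforce
    moreover have "d = lam I (Mrel_pow l)"
      by (simp add: d_def pattern_lam_def map_replicate_const)
    ultimately show ?thesis using lam_Mrel_pow_lt_1[of 1] m_pos by auto
  qed
  moreover have "w > 0"
  proof -
    have "pattern_lam m E l (\<lambda>j\<in>J. True) = d"
      unfolding d_def J_def by (rule pattern_lam_cong) simp
    then have "(\<lambda>j\<in>J. True) \<in> S" by (simp add: S_def)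
    then show ?thesis
      unfolding w_def using finite_E q_range by (intro sum_pattern_prob_pos) (auto simp: J_def)
  qed
  moreover have "E \<noteq> {}" using loops m_pos by auto
  then have "measure P {\<omega> \<in> space P. lam I (Wmat m E l X k \<omega>) \<le> d} = w" for k
    unfolding events w_def J_def using indep distr finite_E l_pos by (intro prob_block_in) auto
  moreover have "indep_events (\<lambda>k. {\<omega> \<in> space P. lam I (Wmat m E l X k \<omega>) \<le> d}) {1..}"
    unfolding events using indep finite_E by (rule indep_events_block)
  ultimately show ?thesis by blast
qed

end
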